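(* If $\mathcal D$ is a probabilistic database with the finite moments property and $\Phi$ is an FO-view over the schema of $\mathcal D$, then $\Phi(\mathcal D)$ also has the finite moments property.
   Context: Fix a countably infinite universe $U$. A database schema is a finite nonempty set of relation symbols with arities; facts are $R(u_1,\dots,u_{\mathrm{ar}(R)})$ with $u_i\in U$; an instance is a finite set of facts ($|D|$ = number of facts); $\mathrm{adom}(D)$ is the set of elements of $U$ occurring in $D$. A probabilistic database (PDB) is a discrete probability space $(\mathbb D,P)$ with $\mathbb D$ a nonempty countable set of instances. It has the finite moments property if $\sum_{D\in\mathbb D}|D|^kP(\{D\})<\infty$ for all $k\in\mathbb N_+$. An FO-view consists of one first-order formula $\Phi_R(x_1,\dots,x_{\mathrm{ar}(R)})$ (constants from $U$ allowed) per output relation symbol $R$, evaluated under active domain semantics (quantifiers range over $\mathrm{adom}(D)$ and the formula's constants), mapping $D$ to the instance containing $R(\bar a)$ for all $\bar a$ over $\mathrm{adom}(D)\cup\mathrm{adom}(\Phi_R)$ with $D\models\Phi_R[\bar a]$. The image $\Phi(\mathcal D)$ of a PDB $(\mathbb D,P)$ is the PDB on $\Phi(\mathbb D)$ with $P'(\{D'\})=P(\{D:\Phi(D)=D'\})$. *)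

theory Defs
  imports "HOL-Probability.Probability"
begin

text \<open>Facts are pairs (relation symbol, tuple of universe elements); an instance is a
finite set of facts; a PDB is a pmf on instances (countable support, probability space).\<close>

type_synonym ('r, 'u) fact = "'r \<times> 'u list"
type_synonym ('r, 'u) inst = "('r, 'u) fact set"

definition is_schema :: "'r set \<Rightarrow> bool" where
  "is_schema S \<longleftrightarrow> finite S \<and> S \<noteq> {}"

definition is_instance :: "('r \<Rightarrow> nat) \<Rightarrow> 'r set \<Rightarrow> ('r, 'u) inst \<Rightarrow> bool" where
  "is_instance ar S D \<longleftrightarrow> finite D \<and> (\<forall>(R, as) \<in> D. R \<in> S \<and> length as = ar R)"

definition adom :: "('r, 'u) inst \<Rightarrow> 'u set" where
  "adom D = (\<Union>(R, as) \<in> D. set as)"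

definition is_pdb :: "('r \<Rightarrow> nat) \<Rightarrow> 'r set \<Rightarrow> ('r, 'u) inst pmf \<Rightarrow> bool" where
  "is_pdb ar S P \<longleftrightarrow> is_schema S \<and> (\<forall>D \<in> set_pmf P. is_instance ar S D)"

definition finite_moments :: "('r, 'u) inst pmf \<Rightarrow> bool" where
  "finite_moments P \<longleftrightarrow>
     (\<forall>k::nat. k > 0 \<longrightarrow> (\<lambda>D. real (card D) ^ k * pmf P D) summable_on set_pmf P)"

datatype 'u fo_term = Var nat | Const 'u

datatype ('r, 'u) fo =
    Atom 'r "'u fo_term list"
  | Eq "'u fo_term" "'u fo_term"
  | Neg "('r, 'u) fo"
  | Conj "('r, 'u) fo" "('r, 'u) fo"
  | Disj "('r, 'u) fo" "('r, 'u) fo"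
  | Ex nat "('r, 'u) fo"
  | All nat "('r, 'u) fo"

fun term_consts :: "'u fo_term \<Rightarrow> 'u set" where
  "term_consts (Var x) = {}"
| "term_consts (Const c) = {c}"

fun term_vars :: "'u fo_term \<Rightarrow> nat set" where
  "term_vars (Var x) = {x}"
| "term_vars (Const c) = {}"

fun eval_term :: "(nat \<Rightarrow> 'u) \<Rightarrow> 'u fo_term \<Rightarrow> 'u" where
  "eval_term v (Var x) = v x"
| "eval_term v (Const c) = c"

fun fo_consts :: "('r, 'u) fo \<Rightarrow> 'u set" where
  "fo_consts (Atom R ts) = (\<Union>t \<in> set ts. term_consts t)"
| "fo_consts (Eq t1 t2) = term_consts t1 \<union> term_consts t2"
| "fo_consts (Neg \<phi>) = fo_consts \<phi>"
| "fo_consts (Conj \<phi> \<psi>) = fo_consts \<phi> \<union> fo_consts \<psi>"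
| "fo_consts (Disj \<phi> \<psi>) = fo_consts \<phi> \<union> fo_consts \<psi>"
| "fo_consts (Ex x \<phi>) = fo_consts \<phi>"
| "fo_consts (All x \<phi>) = fo_consts \<phi>"

fun fo_free :: "('r, 'u) fo \<Rightarrow> nat set" where
  "fo_free (Atom R ts) = (\<Union>t \<in> set ts. term_vars t)"
| "fo_free (Eq t1 t2) = term_vars t1 \<union> term_vars t2"
| "fo_free (Neg \<phi>) = fo_free \<phi>"
| "fo_free (Conj \<phi> \<psi>) = fo_free \<phi> \<union> fo_free \<psi>"
| "fo_free (Disj \<phi> \<psi>) = fo_free \<phi> \<union> fo_free \<psi>"
| "fo_free (Ex x \<phi>) = fo_free \<phi> - {x}"
| "fo_free (All x \<phi>) = fo_free \<phi> - {x}"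

fun fo_wf :: "('r \<Rightarrow> nat) \<Rightarrow> 'r set \<Rightarrow> ('r, 'u) fo \<Rightarrow> bool" where
  "fo_wf ar S (Atom R ts) = (R \<in> S \<and> length ts = ar R)"
| "fo_wf ar S (Eq t1 t2) = True"
| "fo_wf ar S (Neg \<phi>) = fo_wf ar S \<phi>"
| "fo_wf ar S (Conj \<phi> \<psi>) = (fo_wf ar S \<phi> \<and> fo_wf ar S \<psi>)"
| "fo_wf ar S (Disj \<phi> \<psi>) = (fo_wf ar S \<phi> \<and> fo_wf ar S \<psi>)"
| "fo_wf ar S (Ex x \<phi>) = fo_wf ar S \<phi>"
| "fo_wf ar S (All x \<phi>) = fo_wf ar S \<phi>"

fun fo_sat :: "('r, 'u) inst \<Rightarrow> 'u set \<Rightarrow> (nat \<Rightarrow> 'u) \<Rightarrow> ('r, 'u) fo \<Rightarrow> bool" where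
  "fo_sat D A v (Atom R ts) = ((R, map (eval_term v) ts) \<in> D)"
| "fo_sat D A v (Eq t1 t2) = (eval_term v t1 = eval_term v t2)"
| "fo_sat D A v (Neg \<phi>) = (\<not> fo_sat D A v \<phi>)"
| "fo_sat D A v (Conj \<phi> \<psi>) = (fo_sat D A v \<phi> \<and> fo_sat D A v \<psi>)"
| "fo_sat D A v (Disj \<phi> \<psi>) = (fo_sat D A v \<phi> \<or> fo_sat D A v \<psi>)"
| "fo_sat D A v (Ex x \<phi>) = (\<exists>a \<in> A. fo_sat D A (v(x := a)) \<phi>)"
| "fo_sat D A v (All x \<phi>) = (\<forall>a \<in> A. fo_sat D A (v(x := a)) \<phi>)"

definition tuple_val :: "'u list \<Rightarrow> nat \<Rightarrow> 'u" where
  "tuple_val as i = (if i < length as then as ! i else undefined)"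

definition adom_sat :: "('r, 'u) inst \<Rightarrow> ('r, 'u) fo \<Rightarrow> 'u list \<Rightarrow> bool" where
  "adom_sat D \<phi> as = fo_sat D (adom D \<union> fo_consts \<phi>) (tuple_val as) \<phi>"

definition is_fo_view ::
  "('r \<Rightarrow> nat) \<Rightarrow> 'r set \<Rightarrow> ('s \<Rightarrow> nat) \<Rightarrow> 's set \<Rightarrow> ('s \<Rightarrow> ('r, 'u) fo) \<Rightarrow> bool" where
  "is_fo_view ar S ar' S' \<Phi> \<longleftrightarrow> is_schema S' \<and>
     (\<forall>R \<in> S'. fo_wf ar S (\<Phi> R) \<and> fo_free (\<Phi> R) \<subseteq> {..<ar' R})"

definition apply_view ::
  "('s \<Rightarrow> nat) \<Rightarrow> 's set \<Rightarrow> ('s \<Rightarrow> ('r, 'u) fo) \<Rightarrow> ('r, 'u) inst \<Rightarrow> ('s, 'u) inst" where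
  "apply_view ar' S' \<Phi> D = {(R, as). R \<in> S' \<and> length as = ar' R \<and>
       set as \<subseteq> adom D \<union> fo_consts (\<Phi> R) \<and> adom_sat D (\<Phi> R) as}"

definition image_pdb ::
  "('s \<Rightarrow> nat) \<Rightarrow> 's set \<Rightarrow> ('s \<Rightarrow> ('r, 'u) fo) \<Rightarrow> ('r, 'u) inst pmf \<Rightarrow> ('s, 'u) inst pmf" where
  "image_pdb ar' S' \<Phi> P = map_pmf (apply_view ar' S' \<Phi>) P"

end

theory Submission
  imports Defs
begin

text \<open>All facts of \<open>\<Phi>(D)\<close> are tuples over \<open>adom(D)\<close> and the finitely many constants
of \<open>\<Phi>\<close>, and \<open>|adom(D)|\<close> grows at most linearly in \<open>|D|\<close>. Hence \<open>|\<Phi>(D)|\<close> is bounded by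
a polynomial in \<open>|D|\<close>, so every moment of \<open>|\<Phi>(D)|\<close> is dominated by a combination of
moments of \<open>|D|\<close>.\<close>

lemma summable_on_set_pmf_iff_integrable:
  fixes f :: "'a \<Rightarrow> real"
  shows "(\<lambda>x. f x * pmf p x) summable_on set_pmf p \<longleftrightarrow> integrable (measure_pmf p) f"
proof -
  have "(\<lambda>x. f x * pmf p x) summable_on set_pmf p \<longleftrightarrow>
      Infinite_Sum.abs_summable_on (\<lambda>x. f x * pmf p x) (set_pmf p)"
    by (rule summable_on_iff_abs_summable_on_real)
  also have "\<dots> \<longleftrightarrow> Infinite_Set_Sum.abs_summable_on (\<lambda>x. f x * pmf p x) (set_pmf p)"
    by (rule abs_summable_equivalent)
  also have "\<dots> \<longleftrightarrow> Infinite_Set_Sum.abs_summable_on (\<lambda>x. f x * pmf p x) UNIV"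
    by (rule abs_summable_on_cong_neutral) (simp_all add: set_pmf_iff)
  also have "\<dots> \<longleftrightarrow> integrable (count_space UNIV) (\<lambda>x. pmf p x *\<^sub>R f x)"
    unfolding abs_summable_on_def by (simp only: real_scaleR_def mult.commute)
  also have "\<dots> \<longleftrightarrow> integrable (density (count_space UNIV) (pmf p)) f"
    by (rule integrable_density[symmetric]) auto
  also have "\<dots> \<longleftrightarrow> integrable (measure_pmf p) f"
    by (simp only: measure_pmf_eq_density)
  finally show ?thesis .
qed

lemma finite_moments_iff_integrable:
  "finite_moments P \<longleftrightarrow> (\<forall>k. integrable (measure_pmf P) (\<lambda>D. real (card D) ^ k))"
  unfolding finite_moments_def summable_on_set_pmf_iff_integrable
proof (intro iffI allI impI)
  fix k :: nat
  assume "\<forall>k>0. integrable (measure_pmf P) (\<lambda>D. real (card D) ^ k)"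
  then show "integrable (measure_pmf P) (\<lambda>D. real (card D) ^ k)"
    by (cases "k = 0") simp_all
qed simp

lemma power_add_one_le: "((n::nat) + 1) ^ j \<le> 2 ^ j * (n ^ j + 1)"
proof (cases "n = 0")
  case False
  then have "(n + 1) ^ j \<le> (2 * n) ^ j"
    by (intro power_mono) auto
  then show ?thesis
    by (simp add: power_mult_distrib)
qed (simp add: trans_le_add1)

lemma integrable_moments_if_poly_bounded:
  fixes f g :: "'a \<Rightarrow> nat"
  assumes moments: "\<And>k. integrable (measure_pmf p) (\<lambda>x. real (f x) ^ k)"
    and bounded: "\<And>x. x \<in> set_pmf p \<Longrightarrow> g x \<le> c * (f x + 1) ^ d"
  shows "integrable (measure_pmf p) (\<lambda>x. real (g x) ^ k)"
proof (rule Bochner_Integration.integrable_bound)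
  define h where "h x = real (c ^ k * 2 ^ (d * k)) * (real (f x) ^ (d * k) + 1)" for x
  show "integrable (measure_pmf p) h"
    unfolding h_def by (intro integrable_mult_right Bochner_Integration.integrable_add
        moments measure_pmf.integrable_const)
  have nat_bound: "g x ^ k \<le> c ^ k * 2 ^ (d * k) * (f x ^ (d * k) + 1)"
    if "x \<in> set_pmf p" for x
  proof -
    have "g x ^ k \<le> (c * (f x + 1) ^ d) ^ k"
      using bounded[OF that] by (rule power_mono) simp
    also have "\<dots> = c ^ k * (f x + 1) ^ (d * k)"
      by (simp only: power_mult_distrib power_mult)
    also have "\<dots> \<le> c ^ k * (2 ^ (d * k) * (f x ^ (d * k) + 1))"
      by (rule mult_le_mono2) (rule power_add_one_le)
    finally show ?thesis
      by (simp only: mult.assoc)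
  qed
  have "norm (real (g x) ^ k) \<le> norm (h x)" if "x \<in> set_pmf p" for x
  proof -
    have "real (g x ^ k) \<le> real (c ^ k * 2 ^ (d * k) * (f x ^ (d * k) + 1))"
      using nat_bound[OF that] by (rule of_nat_mono)
    then show ?thesis
      by (simp add: h_def algebra_simps)
  qed
  then show "AE x in measure_pmf p. norm (real (g x) ^ k) \<le> norm (h x)"
    by (simp add: AE_measure_pmf_iff)
qed simp

lemma finite_fo_consts: "finite (fo_consts \<phi>)"
proof -
  have "finite (term_consts t)" for t :: "'u fo_term"
    by (cases t) auto
  then show ?thesis
    by (induction \<phi>) auto
qed

lemma finite_adom: "is_instance ar S D \<Longrightarrow> finite (adom D)"
  unfolding is_instance_def adom_def by auto

lemma card_adom_le:
  assumes "is_instance ar S D" "finite S"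
  shows "card (adom D) \<le> card D * sum ar S"
proof -
  have "card (adom D) \<le> (\<Sum>(R, as)\<in>D. card (set as))"
    unfolding adom_def using assms(1) by (auto simp: is_instance_def case_prod_beta intro: card_UN_le)
  also have "\<dots> \<le> (\<Sum>_\<in>D. sum ar S)"
  proof (rule sum_mono)
    fix x assume "x \<in> D"
    then obtain R as where "x = (R, as)" "R \<in> S" "length as = ar R"
      using assms(1) unfolding is_instance_def by fastforce
    with assms(2) show "(case x of (R, as) \<Rightarrow> card (set as)) \<le> sum ar S"
      by (metis card_length case_prod_conv member_le_sum order_trans zero_le)
  qed
  finally show ?thesis
    by simp
qed

lemma card_apply_view_le:
  assumes "finite S'" "finite (adom D)"
  shows "card (apply_view ar' S' \<Phi> D) \<le>
    (\<Sum>R\<in>S'. (card (adom D) + card (fo_consts (\<Phi> R))) ^ ar' R)"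
proof -
  define tuples where "tuples R = {as. set as \<subseteq> adom D \<union> fo_consts (\<Phi> R) \<and> length as = ar' R}"
    for R
  have finite_tuples: "finite (tuples R)" for R
    unfolding tuples_def using assms(2) finite_fo_consts by (intro finite_lists_length_eq) auto
  have "apply_view ar' S' \<Phi> D \<subseteq> (\<Union>R\<in>S'. Pair R ` tuples R)"
    unfolding apply_view_def tuples_def by auto
  then have "card (apply_view ar' S' \<Phi> D) \<le> card (\<Union>R\<in>S'. Pair R ` tuples R)"
    using assms(1) finite_tuples by (intro card_mono) auto
  also have "\<dots> \<le> (\<Sum>R\<in>S'. card (Pair R ` tuples R))"
    using assms(1) by (rule card_UN_le)
  also have "\<dots> \<le> (\<Sum>R\<in>S'. (card (adom D) + card (fo_consts (\<Phi> R))) ^ ar' R)"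
  proof (rule sum_mono)
    fix R
    have "card (Pair R ` tuples R) \<le> card (tuples R)"
      using finite_tuples by (rule card_image_le)
    also have "\<dots> = card (adom D \<union> fo_consts (\<Phi> R)) ^ ar' R"
      unfolding tuples_def using assms(2) finite_fo_consts by (intro card_lists_length_eq) auto
    also have "\<dots> \<le> (card (adom D) + card (fo_consts (\<Phi> R))) ^ ar' R"
      by (intro power_mono card_Un_le) simp
    finally show "card (Pair R ` tuples R) \<le> (card (adom D) + card (fo_consts (\<Phi> R))) ^ ar' R" .
  qed
  finally show ?thesis .
qed

lemma card_apply_view_poly_bounded:
  fixes ar :: "'r \<Rightarrow> nat" and \<Phi> :: "'s \<Rightarrow> ('r, 'u) fo"
  assumes "finite S" "finite S'"
  obtains c d where
    "\<And>D. is_instance ar S D \<Longrightarrow> card (apply_view ar' S' \<Phi> D) \<le> c * (card D + 1) ^ d"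
proof
  define M where "M = sum ar S"
  define C where "C = (\<Sum>R\<in>S'. card (fo_consts (\<Phi> R)))"
  define d where "d = sum ar' S'"
  fix D :: "('r, 'u) inst"
  assume D: "is_instance ar S D"
  define b where "b = (M + C + 1) * (card D + 1)"
  have "(card (adom D) + card (fo_consts (\<Phi> R))) ^ ar' R \<le> b ^ d" if R: "R \<in> S'" for R
  proof -
    have "card (fo_consts (\<Phi> R)) \<le> C"
      unfolding C_def using assms(2) R by (intro member_le_sum) auto
    then have "card (adom D) + card (fo_consts (\<Phi> R)) \<le> b"
      using card_adom_le[OF D assms(1)] unfolding b_def M_def by (simp add: algebra_simps)
    then have "(card (adom D) + card (fo_consts (\<Phi> R))) ^ ar' R \<le> b ^ ar' R"
      by (rule power_mono) simp
    also have "\<dots> \<le> b ^ d"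
      unfolding d_def b_def using assms(2) R by (intro power_increasing member_le_sum) auto
    finally show ?thesis .
  qed
  then have "card (apply_view ar' S' \<Phi> D) \<le> (\<Sum>R\<in>S'. b ^ d)"
    using card_apply_view_le[OF assms(2) finite_adom[OF D]] by (meson order_trans sum_mono)
  then show "card (apply_view ar' S' \<Phi> D) \<le> card S' * (M + C + 1) ^ d * (card D + 1) ^ d"
    by (simp only: sum_constant of_nat_id b_def power_mult_distrib mult.assoc)
qed

theorem lemma3p5:
  fixes ar :: "'r \<Rightarrow> nat" and S :: "'r set"
    and ar' :: "'s \<Rightarrow> nat" and S' :: "'s set"
    and P :: "('r, 'u::countable) inst pmf"
    and \<Phi> :: "'s \<Rightarrow> ('r, 'u) fo"
  assumes "infinite (UNIV :: 'u set)"
    and "is_pdb ar S P"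
    and "finite_moments P"
    and "is_fo_view ar S ar' S' \<Phi>"
  shows "finite_moments (image_pdb ar' S' \<Phi> P)"
proof -
  have instances: "\<And>D. D \<in> set_pmf P \<Longrightarrow> is_instance ar S D"
    using assms(2) by (simp add: is_pdb_def)
  have "finite S"
    using assms(2) by (simp add: is_pdb_def is_schema_def)
  moreover have "finite S'"
    using assms(4) by (simp add: is_fo_view_def is_schema_def)
  ultimately obtain c d where
    bound: "\<And>D. is_instance ar S D \<Longrightarrow> card (apply_view ar' S' \<Phi> D) \<le> c * (card D + 1) ^ d"
    using card_apply_view_poly_bounded[where ar = ar and ar' = ar' and \<Phi> = \<Phi>] by blast
  have moments: "\<And>k. integrable (measure_pmf P) (\<lambda>D. real (card D) ^ k)"
    using assms(3) by (simp add: finite_moments_iff_integrable)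
  have "integrable (measure_pmf P) (\<lambda>D. real (card (apply_view ar' S' \<Phi> D)) ^ k)" for k
    by (rule integrable_moments_if_poly_bounded[OF moments bound[OF instances]])
  then show ?thesis
    unfolding finite_moments_iff_integrable image_pdb_def integrable_map_pmf_eq by simp
qed

end
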